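(* Let $N\ge 1$ and let $h_\beta,h_1,\dots,h_{N-1}$ be arbitrary real numbers. Consider the $(N+1)$-qubit system (a sensor qubit $\beta$ followed by chain qubits $1,\dots,N$) with Hamiltonian $$H=\frac{h_\beta}{2}(X_\beta X_1+Y_\beta Y_1)+\sum_{k=1}^{N-1}\frac{h_k}{2}(X_kX_{k+1}+Y_kY_{k+1}),$$ initial state $\rho_0=\frac{I+X_\beta}{2}\otimes \frac{I}{2^N}$ (sensor in the $+1$ eigenstate of $X$, chain maximally mixed), and output $y(t)=\operatorname{Tr}\big(M\,e^{-\mathrm{i}Ht}\rho_0e^{\mathrm{i}Ht}\big)$ where the measured observable is $M=Y_\beta$ or $M=Z_\beta$. Then $y(t)=0$ for all $t\ge 0$ and all values of the parameters. Consequently the single-qubit sensor cannot identify the parameters $h_\beta,h_1,\dots,h_{N-1}$ (distinct parameter values yield identical outputs).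
   Context: $X,Y,Z$ denote the Pauli matrices $\sigma_x=\begin{pmatrix}0&1\\1&0\end{pmatrix}$, $\sigma_y=\begin{pmatrix}0&-\mathrm{i}\\ \mathrm{i}&0\end{pmatrix}$, $\sigma_z=\begin{pmatrix}1&0\\0&-1\end{pmatrix}$; a subscript indicates which qubit the operator acts on, with identity on all other qubits (tensor products and identities are suppressed). $\hbar=1$. *)

theory Defs
  imports Complex_Main "Jordan_Normal_Form.Matrix"
begin

definition pauliX :: "complex mat" where
  "pauliX = mat_of_rows_list 2 [[0, 1], [1, 0]]"
definition pauliY :: "complex mat" where
  "pauliY = mat_of_rows_list 2 [[0, -\<i>], [\<i>, 0]]"
definition pauliZ :: "complex mat" where
  "pauliZ = mat_of_rows_list 2 [[1, 0], [0, -1]]"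

text \<open>Computational basis index i < 2^n of an n-qubit system; qubit 0 is the
  leftmost tensor factor (most significant bit). qbit n q i is the value of qubit q.\<close>
definition qbit :: "nat \<Rightarrow> nat \<Rightarrow> nat \<Rightarrow> nat" where
  "qbit n q i = (i div 2 ^ (n - 1 - q)) mod 2"

text \<open>Single-qubit operator P acting on qubit q of an n-qubit system,
  identity on all other qubits (i.e. I \<otimes> .. \<otimes> P \<otimes> .. \<otimes> I).\<close>
definition embed :: "nat \<Rightarrow> nat \<Rightarrow> complex mat \<Rightarrow> complex mat" where
  "embed n q P = mat (2 ^ n) (2 ^ n) (\<lambda>(i, j).
     if (\<forall>r<n. r \<noteq> q \<longrightarrow> qbit n r i = qbit n r j)
     then P $$ (qbit n q i, qbit n q j) else 0)"

definition mexp :: "complex mat \<Rightarrow> complex mat" where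
  "mexp A = mat (dim_row A) (dim_col A)
     (\<lambda>(i, j). (\<Sum>k. (A ^\<^sub>m k) $$ (i, j) / of_nat (fact k)))"

text \<open>System: N+1 qubits; qubit 0 is the sensor beta, qubits 1..N are the chain.
  Coupling term (X_a X_b + Y_a Y_b).\<close>
definition XXYY :: "nat \<Rightarrow> nat \<Rightarrow> nat \<Rightarrow> complex mat" where
  "XXYY N a b = embed (N + 1) a pauliX * embed (N + 1) b pauliX
              + embed (N + 1) a pauliY * embed (N + 1) b pauliY"

definition hamiltonian :: "nat \<Rightarrow> real \<Rightarrow> (nat \<Rightarrow> real) \<Rightarrow> complex mat" where
  "hamiltonian N hb h = mat (2 ^ (N + 1)) (2 ^ (N + 1)) (\<lambda>(i, j).
      complex_of_real (hb / 2) * XXYY N 0 1 $$ (i, j)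
    + (\<Sum>k\<in>{1..<N}. complex_of_real (h k / 2) * XXYY N k (k + 1) $$ (i, j)))"

definition rho0 :: "nat \<Rightarrow> complex mat" where
  "rho0 N = (1 / 2 ^ (N + 1)) \<cdot>\<^sub>m (1\<^sub>m (2 ^ (N + 1)) + embed (N + 1) 0 pauliX)"

definition mtrace :: "complex mat \<Rightarrow> complex" where
  "mtrace A = (\<Sum>i<dim_row A. A $$ (i, i))"

definition sensor_output :: "nat \<Rightarrow> complex mat \<Rightarrow> real \<Rightarrow> (nat \<Rightarrow> real) \<Rightarrow> real \<Rightarrow> complex" where
  "sensor_output N M hb h t = (let H = hamiltonian N hb h in
     mtrace (M * mexp ((- (\<i> * complex_of_real t)) \<cdot>\<^sub>m H) * rho0 N
              * mexp ((\<i> * complex_of_real t) \<cdot>\<^sub>m H)))"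

end

theory Submission
  imports Defs
begin

text \<open>The global spin flip \<open>X\<^sub>\<beta> X\<^sub>1 \<cdots> X\<^sub>N\<close> commutes with every coupling \<open>X\<^sub>kX\<^sub>k\<^sub>+\<^sub>1 + Y\<^sub>kY\<^sub>k\<^sub>+\<^sub>1\<close>
  (each \<open>Y\<close> changes sign, and they come in pairs), hence with \<open>e\<^sup>\<plusminus>\<^sup>i\<^sup>H\<^sup>t\<close>, and it fixes
  \<open>\<rho>\<^sub>0\<close>, while it anticommutes with \<open>Y\<^sub>\<beta>\<close> and \<open>Z\<^sub>\<beta>\<close>. Conjugating the product inside the
  trace by it therefore negates the product without changing its trace, so the trace is \<open>0\<close>.
  In the computational basis \<open>X\<^sup>\<otimes>\<^sup>n\<close> is the exchange matrix \<open>i \<mapsto> 2\<^sup>n - 1 - i\<close>, so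
  conjugation by it reverses both indices of a matrix.\<close>

lemma complement_div_power2:
  fixes i n s :: nat
  assumes "i < 2 ^ n" "s \<le> n"
  shows "(2 ^ n - 1 - i) div 2 ^ s = 2 ^ (n - s) - 1 - i div 2 ^ s"
proof -
  define a b where "a = i div 2 ^ s" and "b = i mod 2 ^ s"
  have pn: "(2::nat) ^ n = 2 ^ (n - s) * 2 ^ s" using assms(2) by (simp flip: power_add)
  have "a < 2 ^ (n - s)" using assms(1) unfolding a_def pn by (simp add: less_mult_imp_div_less)
  then obtain c where c: "2 ^ (n - s) = a + 1 + c" using less_imp_Suc_add by fastforce
  have "i = a * 2 ^ s + b" "b < 2 ^ s" unfolding a_def b_def by (simp_all add: div_mult_mod_eq)
  then have "2 ^ n - 1 - i = c * 2 ^ s + (2 ^ s - 1 - b)"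
    unfolding pn c by (simp add: algebra_simps)
  moreover have "2 ^ s - 1 - b < (2::nat) ^ s" by simp
  ultimately show ?thesis using c unfolding a_def[symmetric] by simp
qed

lemma complement_mod_2:
  assumes "a < 2 * (m::nat)"
  shows "(2 * m - 1 - a) mod 2 = 1 - a mod 2"
proof -
  obtain c where c: "2 * m = a + 1 + c" using assms less_imp_Suc_add by fastforce
  then have "even (a + 1 + c)" by (metis dvd_triv_left)
  then show ?thesis using c by (cases "even a") (auto simp: mod_2_eq_odd)
qed

lemma qbit_complement:
  assumes "i < 2 ^ n" "r < n"
  shows "qbit n r (2 ^ n - 1 - i) = 1 - qbit n r i"
proof -
  let ?s = "n - 1 - r"
  have n: "n - ?s = Suc r" "n = Suc r + ?s" using assms(2) by simp_all
  have "i < (2 * 2 ^ r) * 2 ^ ?s"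
    using assms(1) n(2) by (metis power_Suc power_add)
  then have "i div 2 ^ ?s < 2 * 2 ^ r"
    by (simp add: less_mult_imp_div_less)
  moreover have "(2 ^ n - 1 - i) div 2 ^ ?s = 2 * 2 ^ r - 1 - i div 2 ^ ?s"
    using complement_div_power2[OF assms(1), of ?s] n(1) by simp
  ultimately show ?thesis
    unfolding qbit_def by (metis complement_mod_2)
qed

lemma qbit_less_2: "qbit n r i < 2"
  unfolding qbit_def by simp

definition exchange_conj :: "nat \<Rightarrow> 'a mat \<Rightarrow> 'a mat" where
  "exchange_conj d A = mat d d (\<lambda>(i, j). A $$ (d - 1 - i, d - 1 - j))"

lemma dim_exchange_conj [simp]:
  "dim_row (exchange_conj d A) = d" "dim_col (exchange_conj d A) = d"
  unfolding exchange_conj_def by simp_all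

lemma index_exchange_conj [simp]:
  "i < d \<Longrightarrow> j < d \<Longrightarrow> exchange_conj d A $$ (i, j) = A $$ (d - 1 - i, d - 1 - j)"
  unfolding exchange_conj_def by simp

lemma bij_betw_reverse_index: "bij_betw (\<lambda>i. d - 1 - i) {0..<d} {0..<(d::nat)}"
  by (rule bij_betw_byWitness[where f' = "\<lambda>i. d - 1 - i"]) auto

lemma exchange_conj_mult:
  fixes A B :: "'a :: semiring_0 mat"
  assumes "A \<in> carrier_mat d d" "B \<in> carrier_mat d d"
  shows "exchange_conj d (A * B) = exchange_conj d A * exchange_conj d B"
proof (rule eq_matI)
  fix i j assume "i < dim_row (exchange_conj d A * exchange_conj d B)"
    "j < dim_col (exchange_conj d A * exchange_conj d B)"
  then have ij: "i < d" "j < d" by simp_all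
  have "exchange_conj d (A * B) $$ (i, j) = (\<Sum>k\<in>{0..<d}. A $$ (d-1-i, k) * B $$ (k, d-1-j))"
    using assms ij by (simp add: scalar_prod_def)
  also have "\<dots> = (\<Sum>k\<in>{0..<d}. A $$ (d-1-i, d-1-k) * B $$ (d-1-k, d-1-j))"
    using sum.reindex_bij_betw[OF bij_betw_reverse_index, of "\<lambda>k. A $$ (d-1-i, k) * B $$ (k, d-1-j)"]
    by simp
  also have "\<dots> = (exchange_conj d A * exchange_conj d B) $$ (i, j)"
    using ij by (simp add: scalar_prod_def)
  finally show "exchange_conj d (A * B) $$ (i, j) = (exchange_conj d A * exchange_conj d B) $$ (i, j)" .
qed auto

lemma exchange_conj_add:
  "A \<in> carrier_mat d d \<Longrightarrow> B \<in> carrier_mat d d \<Longrightarrow>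
    exchange_conj d (A + B) = exchange_conj d A + exchange_conj d B"
  by (rule eq_matI) auto

lemma exchange_conj_smult:
  "A \<in> carrier_mat d d \<Longrightarrow> exchange_conj d (c \<cdot>\<^sub>m A) = c \<cdot>\<^sub>m exchange_conj d A"
  by (rule eq_matI) auto

lemma exchange_conj_one: "exchange_conj d (1\<^sub>m d) = 1\<^sub>m d"
  by (rule eq_matI) auto

lemma exchange_conj_power:
  fixes A :: "'a :: semiring_1 mat"
  assumes A: "A \<in> carrier_mat d d"
  shows "exchange_conj d (A ^\<^sub>m k) = exchange_conj d A ^\<^sub>m k"
proof (induction k)
  case 0
  then show ?case using A by (simp add: exchange_conj_one)
next
  case (Suc k)
  have "exchange_conj d (A ^\<^sub>m Suc k) = exchange_conj d (A ^\<^sub>m k) * exchange_conj d A"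
    using A by (simp add: exchange_conj_mult)
  then show ?case using Suc by simp
qed

lemma exchange_conj_mexp:
  assumes A: "A \<in> carrier_mat d d"
  shows "exchange_conj d (mexp A) = mexp (exchange_conj d A)"
proof (rule eq_matI)
  fix i j assume "i < dim_row (mexp (exchange_conj d A))" "j < dim_col (mexp (exchange_conj d A))"
  then have ij: "i < d" "j < d" by (simp_all add: mexp_def)
  have "\<And>k. (exchange_conj d A ^\<^sub>m k) $$ (i, j) = (A ^\<^sub>m k) $$ (d-1-i, d-1-j)"
    using ij by (simp flip: exchange_conj_power[OF A])
  then show "exchange_conj d (mexp A) $$ (i, j) = mexp (exchange_conj d A) $$ (i, j)"
    using A ij by (simp add: mexp_def)
qed (use A in \<open>auto simp: mexp_def\<close>)

lemma mexp_carrier: "A \<in> carrier_mat d d \<Longrightarrow> mexp A \<in> carrier_mat d d"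
  unfolding mexp_def by auto

lemma exchange_conj_mexp_smult:
  assumes "H \<in> carrier_mat d d" "exchange_conj d H = H"
  shows "exchange_conj d (mexp (c \<cdot>\<^sub>m H)) = mexp (c \<cdot>\<^sub>m H)"
  using assms by (simp add: exchange_conj_mexp exchange_conj_smult)

lemma mtrace_exchange_conj:
  assumes "A \<in> carrier_mat d d"
  shows "mtrace (exchange_conj d A) = mtrace A"
proof -
  have "mtrace (exchange_conj d A) = (\<Sum>i\<in>{0..<d}. A $$ (d-1-i, d-1-i))"
    unfolding mtrace_def by (simp add: lessThan_atLeast0)
  also have "\<dots> = (\<Sum>i\<in>{0..<d}. A $$ (i, i))"
    using sum.reindex_bij_betw[OF bij_betw_reverse_index, of "\<lambda>k. A $$ (k, k)"] by simp
  finally show ?thesis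
    using assms unfolding mtrace_def by (simp add: lessThan_atLeast0)
qed

lemma mtrace_eq_0_if_exchange_conj_eq_uminus:
  assumes "A \<in> carrier_mat d d" "exchange_conj d A = - A"
  shows "mtrace A = 0"
proof -
  have "mtrace A = mtrace (- A)"
    using assms by (metis mtrace_exchange_conj)
  also have "\<dots> = - mtrace A"
    using assms(1) unfolding mtrace_def by (simp add: sum_negf)
  finally show ?thesis by simp
qed

lemma mtrace_mult_eq_0_if_exchange_conj_odd:
  assumes carrier: "M \<in> carrier_mat d d" "A \<in> carrier_mat d d" "B \<in> carrier_mat d d" "C \<in> carrier_mat d d"
    and odd: "exchange_conj d M = - M"
    and even: "exchange_conj d A = A" "exchange_conj d B = B" "exchange_conj d C = C"
  shows "mtrace (M * A * B * C) = 0"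
proof (rule mtrace_eq_0_if_exchange_conj_eq_uminus)
  show "M * A * B * C \<in> carrier_mat d d" using carrier by (intro mult_carrier_mat)
  have "exchange_conj d (M * A * B * C) = (- M) * A * B * C"
    using carrier by (simp add: exchange_conj_mult odd even)
  also have "\<dots> = - (M * A * B * C)"
    using carrier by simp
  finally show "exchange_conj d (M * A * B * C) = - (M * A * B * C)" .
qed

lemma embed_carrier [simp]: "embed n q P \<in> carrier_mat (2 ^ n) (2 ^ n)"
  unfolding embed_def by simp

lemma embed_uminus:
  "P \<in> carrier_mat 2 2 \<Longrightarrow> embed n q (- P) = - embed n q P"
  by (rule eq_matI) (auto simp: embed_def qbit_less_2)

text \<open>Flipping all qubits conjugates each single-qubit factor by \<open>X\<close>.\<close>
lemma exchange_conj_embed: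
  assumes q: "q < n"
  shows "exchange_conj (2 ^ n) (embed n q P) = embed n q (exchange_conj 2 P)"
proof (rule eq_matI)
  fix i j assume "i < dim_row (embed n q (exchange_conj 2 P))"
    "j < dim_col (embed n q (exchange_conj 2 P))"
  then have ij: "i < 2 ^ n" "j < 2 ^ n" by (simp_all add: embed_def)
  let ?i' = "2 ^ n - 1 - i" and ?j' = "2 ^ n - 1 - j"
  have "qbit n r ?i' = qbit n r ?j' \<longleftrightarrow> qbit n r i = qbit n r j" if r: "r < n" for r
    using qbit_complement[OF ij(1) r] qbit_complement[OF ij(2) r]
      qbit_less_2[of n r i] qbit_less_2[of n r j] by linarith
  then have same_rest: "(\<forall>r<n. r \<noteq> q \<longrightarrow> qbit n r ?i' = qbit n r ?j')
      \<longleftrightarrow> (\<forall>r<n. r \<noteq> q \<longrightarrow> qbit n r i = qbit n r j)"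
    by blast
  have "P $$ (qbit n q ?i', qbit n q ?j') = exchange_conj 2 P $$ (qbit n q i, qbit n q j)"
    using qbit_complement[OF ij(1) q] qbit_complement[OF ij(2) q]
      qbit_less_2[of n q i] qbit_less_2[of n q j] by simp
  with same_rest show "exchange_conj (2 ^ n) (embed n q P) $$ (i, j)
      = embed n q (exchange_conj 2 P) $$ (i, j)"
    using ij by (auto simp: embed_def)
qed (simp_all add: embed_def)

lemma pauli_carrier: "pauliX \<in> carrier_mat 2 2" "pauliY \<in> carrier_mat 2 2" "pauliZ \<in> carrier_mat 2 2"
  unfolding pauliX_def pauliY_def pauliZ_def by (simp_all add: mat_of_rows_list_def numeral_2_eq_2)

lemma exchange_conj_pauli:
  "exchange_conj 2 pauliX = pauliX"
  "exchange_conj 2 pauliY = - pauliY"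
  "exchange_conj 2 pauliZ = - pauliZ"
  unfolding pauliX_def pauliY_def pauliZ_def exchange_conj_def
  by (auto intro!: eq_matI simp: mat_of_rows_list_def numeral_2_eq_2 less_Suc_eq)

lemma exchange_conj_embed_pauli:
  assumes "q < n"
  shows "exchange_conj (2 ^ n) (embed n q pauliX) = embed n q pauliX"
    and "exchange_conj (2 ^ n) (embed n q pauliY) = - embed n q pauliY"
    and "exchange_conj (2 ^ n) (embed n q pauliZ) = - embed n q pauliZ"
  using assms by (simp_all add: exchange_conj_embed exchange_conj_pauli embed_uminus pauli_carrier)

lemma exchange_conj_eq_iff:
  assumes "A \<in> carrier_mat d d"
  shows "exchange_conj d A = A \<longleftrightarrow> (\<forall>i<d. \<forall>j<d. A $$ (d - 1 - i, d - 1 - j) = A $$ (i, j))"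
  using assms by (auto simp: eq_matI mat_eq_iff)

lemma XXYY_carrier: "XXYY N a b \<in> carrier_mat (2 ^ (N + 1)) (2 ^ (N + 1))"
  unfolding XXYY_def by (meson add_carrier_mat mult_carrier_mat embed_carrier)

lemma exchange_conj_XXYY:
  assumes "a < N + 1" "b < N + 1"
  shows "exchange_conj (2 ^ (N + 1)) (XXYY N a b) = XXYY N a b"
proof -
  let ?d = "2 ^ (N + 1) :: nat"
  let ?X = "\<lambda>q. embed (N + 1) q pauliX" and ?Y = "\<lambda>q. embed (N + 1) q pauliY"
  have "?X a * ?X b \<in> carrier_mat ?d ?d" "?Y a * ?Y b \<in> carrier_mat ?d ?d"
    by (meson mult_carrier_mat embed_carrier)+
  then have "exchange_conj ?d (XXYY N a b)
      = exchange_conj ?d (?X a) * exchange_conj ?d (?X b) + exchange_conj ?d (?Y a) * exchange_conj ?d (?Y b)"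
    unfolding XXYY_def by (simp only: exchange_conj_add exchange_conj_mult[OF embed_carrier embed_carrier])
  also have "\<dots> = ?X a * ?X b + (- ?Y a) * (- ?Y b)"
    using assms by (simp only: exchange_conj_embed_pauli)
  also have "(- ?Y a) * (- ?Y b) = ?Y a * ?Y b"
    by (simp add: embed_def)
  finally show ?thesis unfolding XXYY_def .
qed

lemma exchange_conj_hamiltonian:
  assumes "N \<ge> 1"
  shows "exchange_conj (2 ^ (N + 1)) (hamiltonian N hb h) = hamiltonian N hb h"
proof -
  have XXYY_sym: "XXYY N a b $$ (2 ^ (N + 1) - 1 - i, 2 ^ (N + 1) - 1 - j) = XXYY N a b $$ (i, j)"
    if "a < N + 1" "b < N + 1" "i < 2 ^ (N + 1)" "j < 2 ^ (N + 1)" for a b i j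
    using that exchange_conj_XXYY exchange_conj_eq_iff[OF XXYY_carrier] by blast
  show ?thesis
    using assms by (subst exchange_conj_eq_iff)
      (auto simp: hamiltonian_def XXYY_sym[simplified] intro!: sum.cong)
qed

lemma exchange_conj_rho0: "exchange_conj (2 ^ (N + 1)) (rho0 N) = rho0 N"
proof -
  have "0 < N + 1" by simp
  then show ?thesis
    unfolding rho0_def
    by (simp only: exchange_conj_smult[OF add_carrier_mat[OF embed_carrier]]
        exchange_conj_add[OF one_carrier_mat embed_carrier] exchange_conj_one exchange_conj_embed_pauli(1))
qed

lemma hamiltonian_carrier: "hamiltonian N hb h \<in> carrier_mat (2 ^ (N + 1)) (2 ^ (N + 1))"
  unfolding hamiltonian_def by simp

lemma rho0_carrier: "rho0 N \<in> carrier_mat (2 ^ (N + 1)) (2 ^ (N + 1))"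
  unfolding rho0_def by (intro smult_carrier_mat add_carrier_mat embed_carrier)

lemma sensor_output_eq_0:
  assumes "N \<ge> 1"
    and M: "M = embed (N + 1) 0 pauliY \<or> M = embed (N + 1) 0 pauliZ"
  shows "sensor_output N M hb h t = 0"
proof -
  let ?d = "2 ^ (N + 1) :: nat" and ?H = "hamiltonian N hb h"
  have pos: "0 < N + 1" by simp
  have odd: "exchange_conj ?d M = - M" "M \<in> carrier_mat ?d ?d"
    using M exchange_conj_embed_pauli(2,3)[OF pos] embed_carrier[of "N + 1" 0] by auto
  have even: "exchange_conj ?d ?H = ?H" "exchange_conj ?d (rho0 N) = rho0 N"
    using exchange_conj_hamiltonian[OF assms(1)] exchange_conj_rho0 by blast+
  show ?thesis
    unfolding sensor_output_def Let_def
    by (rule mtrace_mult_eq_0_if_exchange_conj_odd[where d = ?d])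
      (simp_all only: odd even hamiltonian_carrier rho0_carrier mexp_carrier smult_carrier_mat
        exchange_conj_mexp_smult)
qed

theorem proposition1:
  fixes N :: nat and hb hb' t :: real and h h' :: "nat \<Rightarrow> real" and M :: "complex mat"
  assumes "N \<ge> 1"
    and "M = embed (N + 1) 0 pauliY \<or> M = embed (N + 1) 0 pauliZ"
    and "t \<ge> 0"
  shows "sensor_output N M hb h t = 0 \<and> sensor_output N M hb h t = sensor_output N M hb' h' t"
  using sensor_output_eq_0[OF assms(1,2)] by simp

end
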